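(* Let $\mathcal{L}:\mathbb{R}^n\to\mathbb{R}$ be differentiable, let $(\eta^{(t)})_{t\ge 0}$ be positive learning rates and $(d^{(t)})_{t\ge0}$ nonnegative scalar thresholds. Let $\theta^{(t)}\in\mathbb{R}^n$ be hidden weights and $w^{(t)}=\mathcal{S}_{d^{(t)}}(\theta^{(t)})$ the actual weights, updated by $$\theta^{(t+1)}=\theta^{(t)}-\eta^{(t)}\,\nabla_w\mathcal{L}(w^{(t)})\odot\nabla_\theta w(\theta^{(t)},d^{(t)}),\qquad w^{(t+1)}=\mathcal{S}_{d^{(t+1)}}(\theta^{(t+1)}),$$ where the $i$-th component of $\nabla_\theta w(\theta^{(t)},d^{(t)})$ is the derivative of $\theta\mapsto \mathcal{S}_{d^{(t)}}(\theta)$ at $\theta_i^{(t)}$ whenever $|\theta_i^{(t)}|\neq d^{(t)}$ (so it equals $1$ when $|\theta_i^{(t)}|>d^{(t)}$). Let $i$ be an index with $w_i^{(t)}\neq 0$ such that $|\theta_i^{(t+1)}|>d^{(t)}$ and $\operatorname{sign}(\theta_i^{(t+1)})=\operatorname{sign}(\theta_i^{(t)})$. Then $$w_i^{(t+1)}=\mathcal{S}_{d^{(t+1)}-d^{(t)}}\Big(w_i^{(t)}-\eta^{(t)}\,\frac{\partial\mathcal{L}}{\partial w_i}(w^{(t)})\Big).$$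
   Context: $\odot$ is the element-wise product. The soft threshold mapping with scalar threshold $d$ is the element-wise map $\mathcal{S}_d(x)_i=\operatorname{sign}(x_i)\max\{|x_i|-d,0\}$ (applied to scalars likewise). *)

theory Defs
  imports "HOL-Analysis.Analysis"
begin

definition soft_thr :: "real \<Rightarrow> real \<Rightarrow> real" where
  "soft_thr d x = sgn x * max (\<bar>x\<bar> - d) 0"

definition soft_thr_vec :: "real \<Rightarrow> real ^ 'n \<Rightarrow> real ^ 'n" where
  "soft_thr_vec d x = (\<chi> i. soft_thr d (x $ i))"

definition grad :: "(real ^ 'n \<Rightarrow> real) \<Rightarrow> real ^ 'n \<Rightarrow> real ^ 'n" where
  "grad L w = (\<chi> i. frechet_derivative L (at w) (axis i 1))"

end

theory Submission
  imports Defs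
begin

text \<open>Above the threshold the soft threshold S_d is the translation x - sgn x * d. Hence the
  gradient factor of coordinate i is 1, the hidden update is a plain gradient step, and as long as
  the step keeps the sign and stays above the threshold, S_d carries it over unchanged to the actual
  weight. The change of threshold is then absorbed by S_d' = S_(d'-d) o S_d, which holds above d.\<close>

lemma soft_thr_eq_0_iff: "soft_thr d x = 0 \<longleftrightarrow> x = 0 \<or> \<bar>x\<bar> \<le> d"
  by (auto simp: soft_thr_def max_def sgn_if)

lemma soft_thr_outside: "\<bar>x\<bar> > d \<Longrightarrow> soft_thr d x = x - sgn x * d"
  by (auto simp: soft_thr_def sgn_if)

lemma soft_thr_compose:
  assumes "\<bar>x\<bar> > d"
  shows "soft_thr (d' - d) (soft_thr d x) = soft_thr d' x"
  using assms by (auto simp: soft_thr_def sgn_if max_def)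

lemma soft_thr_diff_same_sign:
  assumes "\<bar>x\<bar> > d" "\<bar>y\<bar> > d" "sgn y = sgn x"
  shows "soft_thr d y = soft_thr d x - (x - y)"
  using assms by (simp add: soft_thr_outside)

lemma DERIV_soft_thr:
  assumes "d \<ge> 0" "\<bar>x\<bar> > d"
  shows "(soft_thr d has_real_derivative 1) (at x)"
proof (cases "x > d")
  case True
  have "((\<lambda>y. y - d) has_real_derivative 1) (at x)"
    by (auto intro!: derivative_eq_intros)
  then show ?thesis
    by (rule has_field_derivative_transform_within_open[where S="{d<..}"])
      (use True assms in \<open>auto simp: soft_thr_def\<close>)
next
  case False
  with assms have "x < -d" by auto
  have "((\<lambda>y. y + d) has_real_derivative 1) (at x)"
    by (auto intro!: derivative_eq_intros)
  then show ?thesis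
    by (rule has_field_derivative_transform_within_open[where S="{..<-d}"])
      (use \<open>x < -d\<close> assms in \<open>auto simp: soft_thr_def\<close>)
qed

theorem lemma1:
  fixes L :: "real ^ 'n \<Rightarrow> real"
    and eta d :: "nat \<Rightarrow> real"
    and theta w gw :: "nat \<Rightarrow> real ^ 'n"
    and t :: nat and i :: 'n
  assumes diff: "\<And>x. L differentiable (at x)"
    and eta_pos: "\<And>s. eta s > 0"
    and d_nonneg: "\<And>s. d s \<ge> 0"
    and w_def: "\<And>s. w s = soft_thr_vec (d s) (theta s)"
    and gw_def: "\<And>s j. \<bar>theta s $ j\<bar> \<noteq> d s \<Longrightarrow>
                   gw s $ j = deriv (soft_thr (d s)) (theta s $ j)"
    and update: "\<And>s. theta (Suc s) =
                   theta s - (\<chi> j. eta s * (grad L (w s) $ j) * (gw s $ j))"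
    and w_nz: "w t $ i \<noteq> 0"
    and big: "\<bar>theta (Suc t) $ i\<bar> > d t"
    and same_sign: "sgn (theta (Suc t) $ i) = sgn (theta t $ i)"
  shows "w (Suc t) $ i =
           soft_thr (d (Suc t) - d t) (w t $ i - eta t * (grad L (w t) $ i))"
proof -
  have w_nth: "w s $ i = soft_thr (d s) (theta s $ i)" for s
    by (simp add: w_def soft_thr_vec_def)
  have above: "\<bar>theta t $ i\<bar> > d t"
    using w_nz d_nonneg[of t] by (auto simp: w_nth soft_thr_eq_0_iff)
  have "gw t $ i = 1"
    using gw_def[of t i] DERIV_imp_deriv[OF DERIV_soft_thr[OF d_nonneg above]] above by simp
  then have step: "theta (Suc t) $ i = theta t $ i - eta t * (grad L (w t) $ i)"
    by (simp add: update)
  have "w (Suc t) $ i = soft_thr (d (Suc t) - d t) (soft_thr (d t) (theta (Suc t) $ i))"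
    using big by (simp add: w_nth soft_thr_compose)
  also have "soft_thr (d t) (theta (Suc t) $ i) = w t $ i - eta t * (grad L (w t) $ i)"
    using soft_thr_diff_same_sign[OF above big same_sign] by (simp add: w_nth step)
  finally show ?thesis .
qed

end
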